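(* Let $n\ge1$, $0\le m$, and let $T\in\mathbb R[x,u_0,\dots,u_n]$ satisfy $T(\mathcal P_n)\subset\mathcal P_m$. Decompose $T=\sum_{\ell,k}T_{\ell,k}$ where $T_{\ell,k}$ is the sum of those monomial terms $C\,x^ju_{i_1}\cdots u_{i_\ell}$ of $T$ that have degree $\ell$ in the $u$-variables and weight $j+n\ell-(i_1+\cdots+i_\ell)=k$. Then each $T_{\ell,k}$ also satisfies $T_{\ell,k}(\mathcal P_n)\subset\mathcal P_m$.
   Context: Elements $P\in\mathbb R[x,u_0,\dots,u_n]$ act on smooth $f$ by $P[f](x)=P(x,f(x),f'(x),\dots,f^{(n)}(x))$. $\mathcal P_s$ is the space of real polynomials in $x$ of degree at most $s$. The weight is defined on monomials by $\operatorname{wt}(x)=1$, $\operatorname{wt}(u_i)=n-i$, extended multiplicatively-additively. *)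

theory Defs
  imports Complex_Main "HOL-Computational_Algebra.Polynomial"
begin

text \<open>A differential operator T in R[x,u_0,...,u_n] is represented by its coefficient
  function: a monomial x^j u_0^(a 0) ... u_n^(a n) is the pair (j, a), and T (j,a) is its
  real coefficient.\<close>

type_synonym dop = "nat \<times> (nat \<Rightarrow> nat) \<Rightarrow> real"

definition is_dop :: "nat \<Rightarrow> dop \<Rightarrow> bool" where
  "is_dop n T \<longleftrightarrow> finite {mo. T mo \<noteq> 0} \<and>
     (\<forall>j a. T (j, a) \<noteq> 0 \<longrightarrow> (\<forall>i>n. a i = 0))"

text \<open>Action on a polynomial f: T[f](x) = T(x, f(x), f'(x), ..., f^(n)(x)).\<close>
definition dop_eval :: "nat \<Rightarrow> dop \<Rightarrow> real poly \<Rightarrow> real \<Rightarrow> real" where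
  "dop_eval n T f x = (\<Sum>mo\<in>{mo. T mo \<noteq> 0}.
      T mo * x ^ fst mo * (\<Prod>i\<le>n. poly ((pderiv ^^ i) f) x ^ snd mo i))"

definition udeg :: "nat \<Rightarrow> (nat \<Rightarrow> nat) \<Rightarrow> nat" where
  "udeg n a = (\<Sum>i\<le>n. a i)"

definition wt :: "nat \<Rightarrow> nat \<times> (nat \<Rightarrow> nat) \<Rightarrow> nat" where
  "wt n mo = fst mo + (\<Sum>i\<le>n. (n - i) * snd mo i)"

definition component :: "nat \<Rightarrow> dop \<Rightarrow> nat \<Rightarrow> nat \<Rightarrow> dop" where
  "component n T l k = (\<lambda>mo. if udeg n (snd mo) = l \<and> wt n mo = k then T mo else 0)"

definition maps_into :: "nat \<Rightarrow> nat \<Rightarrow> dop \<Rightarrow> bool" where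
  "maps_into n m T \<longleftrightarrow> (\<forall>f::real poly. degree f \<le> n \<longrightarrow>
      (\<exists>q::real poly. degree q \<le> m \<and> (\<forall>x. dop_eval n T f x = poly q x)))"

end

theory Submission
  imports Defs
begin

text \<open>
  Rescaling f in P_n to f_{s,t}(x) = s t^n f(x/t) stays in P_n, and the i-th derivative of
  f_{s,t} at t y is s t^(n-i) f^(i)(y). So a monomial term of u-degree l and weight k picks up
  exactly the factor s^l t^k, i.e. T[f_{s,t}](t y) = sum of s^l t^k T_{l,k}[f](y). The left side
  is a polynomial in y of degree at most m for all s and all t \<noteq> 0; comparing coefficients of
  s^l t^k shows that every T_{l,k}[f] has degree at most m.
\<close>

lemma polyfun_eq_0_off_0:
  fixes c :: "nat \<Rightarrow> 'a::{idom,real_normed_div_algebra}"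
  assumes "\<And>x. x \<noteq> 0 \<Longrightarrow> (\<Sum>i\<le>n. c i * x ^ i) = 0" and "i \<le> n"
  shows "c i = 0"
proof -
  have "infinite (UNIV - {0::'a})"
    by (simp add: infinite_UNIV_char_0)
  moreover have "UNIV - {0} \<subseteq> {x. (\<Sum>i\<le>n. c i * x ^ i) = 0}"
    using assms(1) by blast
  ultimately have "infinite {x. (\<Sum>i\<le>n. c i * x ^ i) = 0}"
    using finite_subset by blast
  then show ?thesis
    using polyfun_finite_roots assms(2) by blast
qed

lemma polyfun2_eq_0_off_0:
  fixes c :: "nat \<Rightarrow> nat \<Rightarrow> 'a::{idom,real_normed_div_algebra}"
  assumes "\<And>x y. x \<noteq> 0 \<Longrightarrow> y \<noteq> 0 \<Longrightarrow> (\<Sum>l\<le>L. \<Sum>k\<le>K. c l k * x ^ l * y ^ k) = 0"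
    and "l \<le> L" "k \<le> K"
  shows "c l k = 0"
proof -
  have "(\<Sum>k\<le>K. c l k * y ^ k) = 0" if "y \<noteq> 0" for y
  proof (rule polyfun_eq_0_off_0[OF _ \<open>l \<le> L\<close>])
    fix x :: 'a assume "x \<noteq> 0"
    then show "(\<Sum>l\<le>L. (\<Sum>k\<le>K. c l k * y ^ k) * x ^ l) = 0"
      using assms(1)[OF _ that] by (simp add: sum_distrib_left sum_distrib_right mult_ac)
  qed
  then show ?thesis
    using polyfun_eq_0_off_0 \<open>k \<le> K\<close> by blast
qed

lemma degree_le_of_scaled_sums_degree_le:
  fixes P :: "nat \<Rightarrow> nat \<Rightarrow> 'a::{idom,real_normed_div_algebra} poly"
  assumes "\<And>x y. x \<noteq> 0 \<Longrightarrow> y \<noteq> 0 \<Longrightarrow> degree (\<Sum>l\<le>L. \<Sum>k\<le>K. smult (x ^ l * y ^ k) (P l k)) \<le> m"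
    and "l \<le> L" "k \<le> K"
  shows "degree (P l k) \<le> m"
proof (rule degree_le, intro allI impI)
  fix d assume "m < d"
  show "coeff (P l k) d = 0"
  proof (rule polyfun2_eq_0_off_0[OF _ assms(2,3)])
    fix x y :: 'a assume "x \<noteq> 0" "y \<noteq> 0"
    then have "coeff (\<Sum>l\<le>L. \<Sum>k\<le>K. smult (x ^ l * y ^ k) (P l k)) d = 0"
      using assms(1) \<open>m < d\<close> by (meson coeff_eq_0 le_less_trans)
    then show "(\<Sum>l\<le>L. \<Sum>k\<le>K. coeff (P l k) d * x ^ l * y ^ k) = 0"
      by (simp add: coeff_sum mult_ac)
  qed
qed

lemma higher_pderiv_smult_pcompose_linear:
  "(pderiv ^^ i) (smult c (f \<circ>\<^sub>p [:0, b:])) = smult (c * b ^ i) ((pderiv ^^ i) f \<circ>\<^sub>p [:0, b:])"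
  by (induction i) (simp_all add: pderiv_smult pderiv_pcompose pderiv_pCons mult_ac)

definition weighted_rescale :: "nat \<Rightarrow> real \<Rightarrow> real \<Rightarrow> real poly \<Rightarrow> real poly" where
  "weighted_rescale n s t f = smult (s * t ^ n) (f \<circ>\<^sub>p [:0, 1 / t:])"

lemma degree_weighted_rescale_le: "degree (weighted_rescale n s t f) \<le> degree f"
proof -
  have "degree (weighted_rescale n s t f) \<le> degree (f \<circ>\<^sub>p [:0, 1 / t:])"
    unfolding weighted_rescale_def by (rule degree_smult_le)
  also have "\<dots> \<le> degree f"
    by (simp add: degree_pcompose)
  finally show ?thesis .
qed

lemma poly_higher_pderiv_weighted_rescale:
  assumes "t \<noteq> 0" "i \<le> n"
  shows "poly ((pderiv ^^ i) (weighted_rescale n s t f)) (t * y)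
    = s * t ^ (n - i) * poly ((pderiv ^^ i) f) y"
proof -
  have "t ^ n * (1 / t) ^ i = t ^ (n - i)"
    using assms by (simp add: power_diff power_one_over)
  then show ?thesis
    using assms
    by (simp add: weighted_rescale_def higher_pderiv_smult_pcompose_linear poly_pcompose mult.assoc)
qed

definition monomial_eval :: "nat \<Rightarrow> real poly \<Rightarrow> nat \<times> (nat \<Rightarrow> nat) \<Rightarrow> real \<Rightarrow> real" where
  "monomial_eval n f mo x = x ^ fst mo * (\<Prod>i\<le>n. poly ((pderiv ^^ i) f) x ^ snd mo i)"

lemma monomial_eval_weighted_rescale:
  assumes "t \<noteq> 0"
  shows "monomial_eval n (weighted_rescale n s t f) mo (t * y)
    = s ^ udeg n (snd mo) * t ^ wt n mo * monomial_eval n f mo y"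
proof -
  have "(\<Prod>i\<le>n. poly ((pderiv ^^ i) (weighted_rescale n s t f)) (t * y) ^ snd mo i)
      = (\<Prod>i\<le>n. (s * t ^ (n - i) * poly ((pderiv ^^ i) f) y) ^ snd mo i)"
    using assms by (intro prod.cong) (simp_all add: poly_higher_pderiv_weighted_rescale)
  also have "\<dots> = s ^ udeg n (snd mo) * t ^ (\<Sum>i\<le>n. (n - i) * snd mo i)
      * (\<Prod>i\<le>n. poly ((pderiv ^^ i) f) y ^ snd mo i)"
    by (simp add: udeg_def power_mult_distrib prod.distrib power_mult power_sum)
  finally show ?thesis
    by (simp add: monomial_eval_def wt_def power_add power_mult_distrib mult_ac)
qed

lemma dop_eval_eq_sum_superset:
  assumes "finite A" "{mo. T mo \<noteq> 0} \<subseteq> A"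
  shows "dop_eval n T f x = (\<Sum>mo\<in>A. T mo * monomial_eval n f mo x)"
  unfolding dop_eval_def monomial_eval_def mult.assoc
  using assms by (intro sum.mono_neutral_left) auto

lemma sum_powers_component:
  assumes "T mo \<noteq> 0 \<Longrightarrow> udeg n (snd mo) \<le> L \<and> wt n mo \<le> K"
  shows "(\<Sum>l\<le>L. \<Sum>k\<le>K. s ^ l * t ^ k * component n T l k mo)
    = s ^ udeg n (snd mo) * t ^ wt n mo * T mo"
proof (cases "T mo = 0")
  case True
  then have "component n T l k mo = 0" for l k
    by (simp add: component_def)
  with True show ?thesis
    by simp
next
  case False
  have "s ^ l * t ^ k * component n T l k mo
      = (if k = wt n mo then if l = udeg n (snd mo) then s ^ l * t ^ k * T mo else 0 else 0)" for l k
    by (simp add: component_def)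
  then show ?thesis
    using assms False by (simp add: sum.delta)
qed

lemma dop_eval_weighted_rescale:
  assumes "finite {mo. T mo \<noteq> 0}" "t \<noteq> 0"
    and bounds: "\<And>mo. T mo \<noteq> 0 \<Longrightarrow> udeg n (snd mo) \<le> L \<and> wt n mo \<le> K"
  shows "dop_eval n T (weighted_rescale n s t f) (t * y)
    = (\<Sum>l\<le>L. \<Sum>k\<le>K. s ^ l * t ^ k * dop_eval n (component n T l k) f y)"
proof -
  let ?S = "{mo. T mo \<noteq> 0}"
  have "{mo. component n T l k mo \<noteq> 0} \<subseteq> ?S" for l k
    by (auto simp: component_def)
  then have "(\<Sum>l\<le>L. \<Sum>k\<le>K. s ^ l * t ^ k * dop_eval n (component n T l k) f y)
      = (\<Sum>l\<le>L. \<Sum>k\<le>K. \<Sum>mo\<in>?S. s ^ l * t ^ k * component n T l k mo * monomial_eval n f mo y)"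
    using assms(1) by (simp add: dop_eval_eq_sum_superset[of ?S] sum_distrib_left mult.assoc)
  also have "\<dots> = (\<Sum>mo\<in>?S. (\<Sum>l\<le>L. \<Sum>k\<le>K. s ^ l * t ^ k * component n T l k mo) * monomial_eval n f mo y)"
    by (simp add: sum_distrib_right sum.swap[of _ ?S])
  also have "\<dots> = (\<Sum>mo\<in>?S. T mo * monomial_eval n (weighted_rescale n s t f) mo (t * y))"
  proof (rule sum.cong[OF refl])
    fix mo
    show "(\<Sum>l\<le>L. \<Sum>k\<le>K. s ^ l * t ^ k * component n T l k mo) * monomial_eval n f mo y
        = T mo * monomial_eval n (weighted_rescale n s t f) mo (t * y)"
      using bounds[of mo] assms(2) by (simp add: sum_powers_component monomial_eval_weighted_rescale)
  qed
  also have "\<dots> = dop_eval n T (weighted_rescale n s t f) (t * y)"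
    by (simp add: dop_eval_eq_sum_superset[OF assms(1) order_refl])
  finally show ?thesis ..
qed

definition dop_poly :: "nat \<Rightarrow> dop \<Rightarrow> real poly \<Rightarrow> real poly" where
  "dop_poly n T f = (\<Sum>mo\<in>{mo. T mo \<noteq> 0}.
      smult (T mo) ([:0, 1:] ^ fst mo * (\<Prod>i\<le>n. ((pderiv ^^ i) f) ^ snd mo i)))"

lemma poly_dop_poly: "poly (dop_poly n T f) x = dop_eval n T f x"
  by (simp add: dop_poly_def dop_eval_def poly_sum poly_prod mult.assoc)

lemma maps_into_iff_degree_dop_poly:
  "maps_into n m T \<longleftrightarrow> (\<forall>f. degree f \<le> n \<longrightarrow> degree (dop_poly n T f) \<le> m)"
proof -
  have "(\<forall>x. dop_eval n T f x = poly q x) \<longleftrightarrow> q = dop_poly n T f" for f q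
    by (auto simp: poly_dop_poly poly_eq_poly_eq_iff[symmetric])
  then show ?thesis
    unfolding maps_into_def by auto
qed

lemma sum_smult_dop_poly_component:
  assumes "finite {mo. T mo \<noteq> 0}" "t \<noteq> 0"
    and "\<And>mo. T mo \<noteq> 0 \<Longrightarrow> udeg n (snd mo) \<le> L \<and> wt n mo \<le> K"
  shows "(\<Sum>l\<le>L. \<Sum>k\<le>K. smult (s ^ l * t ^ k) (dop_poly n (component n T l k) f))
    = dop_poly n T (weighted_rescale n s t f) \<circ>\<^sub>p [:0, t:]"
  by (rule poly_ext)
    (simp add: poly_sum poly_pcompose poly_dop_poly mult.commute[of _ t] dop_eval_weighted_rescale[OF assms])

lemma finite_support_udeg_wt_bounded:
  assumes "finite {mo. T mo \<noteq> 0}"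
  obtains L K where "\<And>mo. T mo \<noteq> 0 \<Longrightarrow> udeg n (snd mo) \<le> L \<and> wt n mo \<le> K"
proof
  fix mo assume "T mo \<noteq> 0"
  with assms show "udeg n (snd mo) \<le> (\<Sum>mo\<in>{mo. T mo \<noteq> 0}. udeg n (snd mo)) \<and>
      wt n mo \<le> (\<Sum>mo\<in>{mo. T mo \<noteq> 0}. wt n mo)"
    by (auto intro: member_le_sum)
qed

lemma degree_dop_poly_component_le:
  assumes "maps_into n m T" "degree f \<le> n" "finite {mo. T mo \<noteq> 0}"
    and bounds: "\<And>mo. T mo \<noteq> 0 \<Longrightarrow> udeg n (snd mo) \<le> L \<and> wt n mo \<le> K"
    and "l \<le> L" "k \<le> K"
  shows "degree (dop_poly n (component n T l k) f) \<le> m"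
proof (rule degree_le_of_scaled_sums_degree_le[OF _ \<open>l \<le> L\<close> \<open>k \<le> K\<close>])
  fix s t :: real assume "t \<noteq> 0"
  have "degree (dop_poly n T (weighted_rescale n s t f)) \<le> m"
    using assms(1,2) degree_weighted_rescale_le
    unfolding maps_into_iff_degree_dop_poly by (meson order_trans)
  then show "degree (\<Sum>l\<le>L. \<Sum>k\<le>K. smult (s ^ l * t ^ k) (dop_poly n (component n T l k) f)) \<le> m"
    using \<open>t \<noteq> 0\<close> by (simp add: sum_smult_dop_poly_component[OF assms(3) _ bounds] degree_pcompose)
qed

theorem mainTheorem7:
  fixes n m :: nat and T :: dop
  assumes "n \<ge> 1"
    and "is_dop n T"
    and "maps_into n m T"
  shows "\<forall>l k. maps_into n m (component n T l k)"
proof (intro allI)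
  fix l k
  have fin: "finite {mo. T mo \<noteq> 0}"
    using assms(2) by (simp add: is_dop_def)
  obtain L K where bounds: "\<And>mo. T mo \<noteq> 0 \<Longrightarrow> udeg n (snd mo) \<le> L \<and> wt n mo \<le> K"
    and "l \<le> L" "k \<le> K"
  proof -
    obtain L0 K0 where "\<And>mo. T mo \<noteq> 0 \<Longrightarrow> udeg n (snd mo) \<le> L0 \<and> wt n mo \<le> K0"
      using finite_support_udeg_wt_bounded[OF fin] by blast
    then show thesis
      using that[of "max l L0" "max k K0"] by fastforce
  qed
  show "maps_into n m (component n T l k)"
    unfolding maps_into_iff_degree_dop_poly
    using degree_dop_poly_component_le[OF assms(3) _ fin bounds \<open>l \<le> L\<close> \<open>k \<le> K\<close>] by blast
qed

end
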